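(* Let $(X,d,\ll,\le,\tau)$ be a locally causally closed and $d$-compatible Lorentzian pre-length space, and let $(\gamma_n)_n$ be a sequence of future-directed causal curves $\gamma_n:[0,L_n]\to X$ parametrized with respect to $d$-arclength, with $L_n:=L^d(\gamma_n)\to\infty$. Suppose that either there is a compact set containing every $\gamma_n([0,L_n])$, or $d$ is proper and $\gamma_n(0)\to x$ for some $x\in X$. Then there exist a subsequence $(\gamma_{n_k})_k$ and a future-directed causal curve $\gamma:[0,\infty)\to X$ such that $\gamma_{n_k}\to\gamma$ locally uniformly (i.e., for every $T>0$, $\gamma_{n_k}|_{[0,T]}\to\gamma|_{[0,T]}$ uniformly, this being defined for all $k$ large). Moreover, $\gamma$ is inextendible, i.e., $\lim_{t\to\infty}\gamma(t)$ does not exist in $X$.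
   Context: A causal space $(X,\ll,\le)$: $\le$ reflexive and transitive, $\ll$ transitive, $x\ll y\Rightarrow x\le y$. A Lorentzian pre-length space $(X,d,\ll,\le,\tau)$ is a causal space with a metric $d$ and $\tau:X\times X\to[0,\infty]$ lower semicontinuous w.r.t. $d$, with $\tau(x,z)\ge\tau(x,y)+\tau(y,z)$ for $x\le y\le z$, $\tau(x,y)=0$ if $x\not\le y$, $\tau(x,y)>0\iff x\ll y$. A future-directed causal curve is a non-constant $d$-locally Lipschitz $\gamma:I\to X$ with $\gamma(t_1)\le\gamma(t_2)$ for $t_1<t_2$; causal curves are future- or past-directed ones. $L^d$ is $d$-arclength; $d$ is proper if closed bounded sets are compact. Locally causally closed: every point has a neighborhood $U$ such that $p_n,q_n\in U$, $p_n\le q_n$, $p_n\to p\in\bar U$, $q_n\to q\in\bar U$ imply $p\le q$. $d$-compatible: every point has a neighborhood $U$ and $C>0$ with $L^d(\gamma)\le C$ for all causal curves $\gamma$ contained in $U$. A future-directed causal curve on $[a,b)$ is inextendible if it admits no extension to a future-directed causal curve including the endpoint; for curves on $[0,\infty)$ this is understood as non-existence of $\lim_{t\to\infty}\gamma(t)$. *)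

theory Defs
  imports "HOL-Analysis.Analysis"
begin

text \<open>The metric space (X,d) is the type 'a with its metric dist.
  The causal relations are ll (chronological) and le (causal); tau is the time separation.\<close>

definition causal_space :: "('a \<Rightarrow> 'a \<Rightarrow> bool) \<Rightarrow> ('a \<Rightarrow> 'a \<Rightarrow> bool) \<Rightarrow> bool" where
  "causal_space ll le \<longleftrightarrow> reflp le \<and> transp le \<and> transp ll \<and> (\<forall>x y. ll x y \<longrightarrow> le x y)"

definition lorentzian_pre_length_space ::
  "('a::metric_space \<Rightarrow> 'a \<Rightarrow> bool) \<Rightarrow> ('a \<Rightarrow> 'a \<Rightarrow> bool) \<Rightarrow> ('a \<Rightarrow> 'a \<Rightarrow> ennreal) \<Rightarrow> bool" where
  "lorentzian_pre_length_space ll le tau \<longleftrightarrow>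
     causal_space ll le \<and>
     (\<forall>c. open {p :: 'a \<times> 'a. c < tau (fst p) (snd p)}) \<and>
     (\<forall>x y z. le x y \<and> le y z \<longrightarrow> tau x z \<ge> tau x y + tau y z) \<and>
     (\<forall>x y. \<not> le x y \<longrightarrow> tau x y = 0) \<and>
     (\<forall>x y. tau x y > 0 \<longleftrightarrow> ll x y)"

definition curve_length :: "(real \<Rightarrow> 'a::metric_space) \<Rightarrow> real set \<Rightarrow> ereal" where
  "curve_length \<gamma> I = Sup {ereal (\<Sum>i<n. dist (\<gamma> (p i)) (\<gamma> (p (Suc i)))) | n p.
       (\<forall>i\<le>n. p i \<in> I) \<and> (\<forall>i<n. p i \<le> p (Suc i))}"

definition locally_lipschitz_on :: "real set \<Rightarrow> (real \<Rightarrow> 'a::metric_space) \<Rightarrow> bool" where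
  "locally_lipschitz_on I \<gamma> \<longleftrightarrow>
     (\<forall>t\<in>I. \<exists>e>0. \<exists>C. \<forall>s\<in>I \<inter> ball t e. \<forall>u\<in>I \<inter> ball t e. dist (\<gamma> s) (\<gamma> u) \<le> C * \<bar>s - u\<bar>)"

definition future_causal_curve ::
  "('a::metric_space \<Rightarrow> 'a \<Rightarrow> bool) \<Rightarrow> (real \<Rightarrow> 'a) \<Rightarrow> real set \<Rightarrow> bool" where
  "future_causal_curve le \<gamma> I \<longleftrightarrow> is_interval I \<and> locally_lipschitz_on I \<gamma> \<and>
     (\<exists>s\<in>I. \<exists>t\<in>I. \<gamma> s \<noteq> \<gamma> t) \<and>
     (\<forall>t1\<in>I. \<forall>t2\<in>I. t1 < t2 \<longrightarrow> le (\<gamma> t1) (\<gamma> t2))"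

definition past_causal_curve ::
  "('a::metric_space \<Rightarrow> 'a \<Rightarrow> bool) \<Rightarrow> (real \<Rightarrow> 'a) \<Rightarrow> real set \<Rightarrow> bool" where
  "past_causal_curve le \<gamma> I \<longleftrightarrow> is_interval I \<and> locally_lipschitz_on I \<gamma> \<and>
     (\<exists>s\<in>I. \<exists>t\<in>I. \<gamma> s \<noteq> \<gamma> t) \<and>
     (\<forall>t1\<in>I. \<forall>t2\<in>I. t1 < t2 \<longrightarrow> le (\<gamma> t2) (\<gamma> t1))"

definition causal_curve ::
  "('a::metric_space \<Rightarrow> 'a \<Rightarrow> bool) \<Rightarrow> (real \<Rightarrow> 'a) \<Rightarrow> real set \<Rightarrow> bool" where
  "causal_curve le \<gamma> I \<longleftrightarrow> future_causal_curve le \<gamma> I \<or> past_causal_curve le \<gamma> I"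

definition locally_causally_closed :: "('a::metric_space \<Rightarrow> 'a \<Rightarrow> bool) \<Rightarrow> bool" where
  "locally_causally_closed le \<longleftrightarrow>
     (\<forall>x. \<exists>U. x \<in> interior U \<and>
        (\<forall>p q p0 q0. (\<forall>n. p n \<in> U \<and> q n \<in> U \<and> le (p n) (q n)) \<and>
            p \<longlonglongrightarrow> p0 \<and> p0 \<in> closure U \<and> q \<longlonglongrightarrow> q0 \<and> q0 \<in> closure U
            \<longrightarrow> le p0 q0))"

definition d_compatible :: "('a::metric_space \<Rightarrow> 'a \<Rightarrow> bool) \<Rightarrow> bool" where
  "d_compatible le \<longleftrightarrow>
     (\<forall>x. \<exists>U C. x \<in> interior U \<and> C > 0 \<and>
        (\<forall>\<gamma> I. causal_curve le \<gamma> I \<and> \<gamma> ` I \<subseteq> U \<longrightarrow> curve_length \<gamma> I \<le> ereal C))"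

definition proper_metric :: "'a::metric_space itself \<Rightarrow> bool" where
  "proper_metric _ \<longleftrightarrow> (\<forall>S :: 'a set. closed S \<and> bounded S \<longrightarrow> compact S)"

end

theory Submission
  imports Defs
begin

text \<open>Parametrised by arclength, the curves are 1-Lipschitz. Extended constantly beyond their
  endpoints and confined pointwise to compact sets (a common compact set, or in the proper case
  balls around the limit of the initial points), a diagonal argument over the rationals together
  with equicontinuity yields a locally uniformly convergent subsequence with 1-Lipschitz limit.
  Local causal closedness passes the causal relations of the curves to the limit near every
  parameter, and a Lebesgue number argument makes them global. Finally, if the limit curve had an
  endpoint y, arbitrarily long arclength segments of the approximating curves would stay in a
  neighbourhood of y in which d-compatibility bounds the length of causal curves.\<close>

lemma dist_le_curve_length:
  assumes "s \<in> I" "t \<in> I" "s \<le> t"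
  shows "ereal (dist (c s) (c t)) \<le> curve_length c I"
proof -
  let ?p = "\<lambda>i::nat. if i = 0 then s else t"
  have "ereal (\<Sum>i<1. dist (c (?p i)) (c (?p (Suc i)))) \<le> curve_length c I"
    unfolding curve_length_def
    by (rule Sup_upper, rule CollectI, intro exI[of _ 1] exI[of _ ?p])
      (use assms in \<open>auto simp: le_Suc_eq\<close>)
  then show ?thesis by simp
qed

lemma curve_length_pos_imp_nonconstant:
  assumes "0 < curve_length c I"
  shows "\<exists>s\<in>I. \<exists>t\<in>I. c s \<noteq> c t"
proof (rule ccontr)
  assume const: "\<not> (\<exists>s\<in>I. \<exists>t\<in>I. c s \<noteq> c t)"
  have "curve_length c I \<le> 0"
    unfolding curve_length_def
  proof (rule Sup_least, clarify)
    fix n and p :: "nat \<Rightarrow> real" assume "\<forall>i\<le>n. p i \<in> I"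
    then have "(\<Sum>i<n. dist (c (p i)) (c (p (Suc i)))) = 0"
      using const by (intro sum.neutral) auto
    then show "ereal (\<Sum>i<n. dist (c (p i)) (c (p (Suc i)))) \<le> 0" by simp
  qed
  with assms show False by simp
qed

lemma arclength_imp_lipschitz_on:
  assumes "\<And>s t. 0 \<le> s \<Longrightarrow> s \<le> t \<Longrightarrow> t \<le> l \<Longrightarrow> curve_length c {s..t} = ereal (t - s)"
  shows "1-lipschitz_on {0..l} c"
proof (rule lipschitz_on_leI)
  fix s t assume "s \<in> {0..l}" "t \<in> {0..l}" "s \<le> t"
  then have "ereal (dist (c s) (c t)) \<le> ereal (t - s)"
    using dist_le_curve_length[of s "{s..t}" t c] assms by auto
  then show "dist (c s) (c t) \<le> 1 * dist s t"
    using \<open>s \<le> t\<close> by (simp add: dist_real_def)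
qed simp

lemma locally_lipschitz_on_subset:
  assumes "locally_lipschitz_on I c" "J \<subseteq> I"
  shows "locally_lipschitz_on J c"
  unfolding locally_lipschitz_on_def
proof
  fix t assume "t \<in> J"
  then obtain e C where "e > 0"
    "\<forall>s\<in>I \<inter> ball t e. \<forall>u\<in>I \<inter> ball t e. dist (c s) (c u) \<le> C * \<bar>s - u\<bar>"
    using assms unfolding locally_lipschitz_on_def by blast
  then show "\<exists>e>0. \<exists>C. \<forall>s\<in>J \<inter> ball t e. \<forall>u\<in>J \<inter> ball t e. dist (c s) (c u) \<le> C * \<bar>s - u\<bar>"
    using assms(2) by blast
qed

lemma lipschitz_on_imp_locally_lipschitz_on:
  assumes "C-lipschitz_on I c"
  shows "locally_lipschitz_on I c"
  unfolding locally_lipschitz_on_def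
proof
  fix t assume "t \<in> I"
  have "\<forall>s\<in>I \<inter> ball t 1. \<forall>u\<in>I \<inter> ball t 1. dist (c s) (c u) \<le> C * \<bar>s - u\<bar>"
    using lipschitz_onD[OF assms] by (simp add: dist_real_def)
  then show "\<exists>e>0. \<exists>C. \<forall>s\<in>I \<inter> ball t e. \<forall>u\<in>I \<inter> ball t e. dist (c s) (c u) \<le> C * \<bar>s - u\<bar>"
    using zero_less_one by blast
qed

lemma future_causal_curve_subinterval:
  assumes "future_causal_curve le c I" "is_interval J" "J \<subseteq> I" "\<exists>s\<in>J. \<exists>t\<in>J. c s \<noteq> c t"
  shows "future_causal_curve le c J"
  using assms locally_lipschitz_on_subset unfolding future_causal_curve_def by blast

lemma pointwise_convergent_subseq:
  fixes F :: "nat \<Rightarrow> 'i::countable \<Rightarrow> 'a::metric_space"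
  assumes "\<And>i. compact (C i)" "\<And>n i. F n i \<in> C i"
  obtains r :: "nat \<Rightarrow> nat" and f where "strict_mono r" "\<And>i. (\<lambda>k. F (r k) i) \<longlonglongrightarrow> f i"
proof -
  have "compactin (product_topology (\<lambda>i. euclidean) UNIV) (PiE UNIV C)"
    using assms(1) by (subst compactin_PiE) auto
  then have "seq_compact (PiE UNIV C)"
    by (intro compact_imp_seq_compact) (simp add: euclidean_product_topology)
  moreover have "\<forall>n. F n \<in> PiE UNIV C"
    using assms(2) by auto
  ultimately obtain f r where "strict_mono r" "(F \<circ> r) \<longlonglongrightarrow> f"
    by (rule seq_compactE) blast
  moreover have "(\<lambda>k. F (r k) i) \<longlonglongrightarrow> f i" if "(F \<circ> r) \<longlonglongrightarrow> f" for i
    using continuous_on_tendsto_compose[OF continuous_on_product_coordinates that]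
    by (simp add: o_def)
  ultimately show ?thesis using that by blast
qed

text \<open>Every point of a compact set is close to one of finitely many rationals.\<close>

lemma equi_lipschitz_uniformly_Cauchy_on:
  fixes h :: "nat \<Rightarrow> real \<Rightarrow> 'a::metric_space"
  assumes lip: "\<And>k. 1-lipschitz_on UNIV (h k)"
    and cauchy: "\<And>q. Cauchy (\<lambda>k. h k (of_rat q))"
    and "compact S"
  shows "uniformly_Cauchy_on S h"
proof (rule uniformly_Cauchy_onI)
  fix e :: real assume "e > 0"
  obtain D where "finite D" and D: "S \<subseteq> (\<Union>q\<in>D. ball (of_rat q) (e/3))"
  proof (rule compactE_image[OF \<open>compact S\<close>])
    show "S \<subseteq> (\<Union>q\<in>UNIV. ball (of_rat q) (e/3))"
    proof
      fix t :: real
      obtain q where "t < of_rat q" "of_rat q < t + e/3"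
        using of_rat_dense[of t "t + e/3"] \<open>e > 0\<close> by auto
      then have "t \<in> ball (of_rat q) (e/3)"
        by (simp add: dist_real_def)
      then show "t \<in> (\<Union>q\<in>UNIV. ball (of_rat q) (e/3))"
        by blast
    qed
  qed auto
  have "\<exists>M. \<forall>k\<ge>M. \<forall>l\<ge>M. dist (h k (of_rat q)) (h l (of_rat q)) < e/3" for q
    using cauchy[of q] \<open>e > 0\<close> unfolding Cauchy_def by (meson divide_pos_pos zero_less_numeral)
  then obtain Mq where Mq: "\<And>q k l. k \<ge> Mq q \<Longrightarrow> l \<ge> Mq q \<Longrightarrow> dist (h k (of_rat q)) (h l (of_rat q)) < e/3"
    by metis
  define M where "M = Max (Mq ` D)"
  have M: "dist (h k (of_rat q)) (h l (of_rat q)) < e/3" if "k \<ge> M" "l \<ge> M" "q \<in> D" for k l q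
    using Mq that Max_ge[OF finite_imageI[OF \<open>finite D\<close>], of "Mq q" Mq] unfolding M_def
    by (meson image_eqI order_trans)
  have "dist (h k t) (h l t) < e" if "t \<in> S" "M \<le> k" "M \<le> l" for t k l
  proof -
    obtain q where "q \<in> D" and q: "dist (of_rat q) t < e/3"
      using D \<open>t \<in> S\<close> by (auto simp: dist_commute)
    have "dist (h k t) (h l t) \<le> dist (h k t) (h k (of_rat q)) + dist (h k (of_rat q)) (h l (of_rat q))
        + dist (h l (of_rat q)) (h l t)"
      using dist_triangle[of "h k t" "h l t" "h k (of_rat q)"]
        dist_triangle[of "h k (of_rat q)" "h l t" "h l (of_rat q)"] by linarith
    also have "\<dots> < e/3 + e/3 + e/3"
    proof -
      have "dist (h k t) (h k (of_rat q)) < e/3" "dist (h l (of_rat q)) (h l t) < e/3"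
        using lipschitz_onD[OF lip[of k], of t "of_rat q"] lipschitz_onD[OF lip[of l], of "of_rat q" t] q
        by (simp_all add: dist_commute)
      then show ?thesis using M[OF \<open>M \<le> k\<close> \<open>M \<le> l\<close> \<open>q \<in> D\<close>] by linarith
    qed
    finally show ?thesis by simp
  qed
  then show "\<exists>M. \<forall>t\<in>S. \<forall>k\<ge>M. \<forall>l\<ge>M. dist (h k t) (h l t) < e" by blast
qed

lemma uniformly_Cauchy_on_imp_uniform_limit:
  assumes "uniformly_Cauchy_on X f" "\<And>x. x \<in> X \<Longrightarrow> (\<lambda>n. f n x) \<longlonglongrightarrow> l x"
  shows "uniform_limit X f l sequentially"
proof (rule uniform_limitI)
  fix e :: real assume "e > 0"
  then obtain N where N: "\<And>x m n. x \<in> X \<Longrightarrow> m \<ge> N \<Longrightarrow> n \<ge> N \<Longrightarrow> dist (f m x) (f n x) < e/2"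
    using assms(1) unfolding uniformly_Cauchy_on_def by (meson half_gt_zero)
  have half: "dist (f n x) (l x) \<le> e/2" if "x \<in> X" "n \<ge> N" for x n
  proof (rule tendsto_upperbound)
    show "((\<lambda>m. dist (f n x) (f m x)) \<longlongrightarrow> dist (f n x) (l x)) sequentially"
      by (intro tendsto_intros assms(2) \<open>x \<in> X\<close>)
    show "\<forall>\<^sub>F m in sequentially. dist (f n x) (f m x) \<le> e/2"
      unfolding eventually_sequentially using N that by (meson less_imp_le)
  qed simp
  have "dist (f n x) (l x) < e" if "x \<in> X" "n \<ge> N" for x n
    using half[OF that] \<open>e > 0\<close> by linarith
  then show "\<forall>\<^sub>F n in sequentially. \<forall>x\<in>X. dist (f n x) (l x) < e"
    unfolding eventually_sequentially by blast
qed

text \<open>Completeness of the target space is replaced by confining the values at each time to a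
  compact set.\<close>

lemma lipschitz_Arzela_Ascoli:
  fixes c :: "nat \<Rightarrow> real \<Rightarrow> 'a::metric_space"
  assumes compact: "\<And>t. compact (C t)" and bound: "\<And>n t. c n t \<in> C t"
    and lip: "\<And>n. 1-lipschitz_on UNIV (c n)"
  obtains r :: "nat \<Rightarrow> nat" and g where "strict_mono r" "1-lipschitz_on UNIV g"
    "\<And>S. compact S \<Longrightarrow> uniform_limit S (\<lambda>k. c (r k)) g sequentially"
proof -
  obtain r f where r: "strict_mono r" and f: "\<And>q::rat. (\<lambda>k. c (r k) (of_rat q)) \<longlonglongrightarrow> f q"
    using pointwise_convergent_subseq[of "\<lambda>q. C (of_rat q)" "\<lambda>n q. c n (of_rat q)"] compact bound
    by blast
  have uC: "uniformly_Cauchy_on S (\<lambda>k. c (r k))" if "compact S" for S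
    using lip f that by (intro equi_lipschitz_uniformly_Cauchy_on) (auto intro: convergent_Cauchy convergentI)
  define g where "g t = lim (\<lambda>k. c (r k) t)" for t
  have g: "(\<lambda>k. c (r k) t) \<longlonglongrightarrow> g t" for t
  proof -
    have "Cauchy (\<lambda>k. c (r k) t)"
      using uC[of "{t}"] by (simp add: uniformly_Cauchy_on_def Cauchy_def)
    then obtain l where "(\<lambda>k. c (r k) t) \<longlonglongrightarrow> l"
      using compact_imp_complete[OF compact[of t]] bound unfolding complete_def by meson
    then show ?thesis by (simp add: g_def limI)
  qed
  have "1-lipschitz_on UNIV g"
  proof (rule lipschitz_onI)
    fix s t :: real
    show "dist (g s) (g t) \<le> 1 * dist s t"
    proof (rule tendsto_upperbound[OF tendsto_dist[OF g g]])
      show "\<forall>\<^sub>F k in sequentially. 1 * dist s t \<ge> dist (c (r k) s) (c (r k) t)"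
        using lipschitz_onD[OF lip] by simp
    qed simp
  qed simp
  moreover have "uniform_limit S (\<lambda>k. c (r k)) g sequentially" if "compact S" for S
    using uC[OF that] g by (rule uniformly_Cauchy_on_imp_uniform_limit)
  ultimately show ?thesis
    using that r by blast
qed

text \<open>Chain along a partition finer than a Lebesgue number of the local neighbourhoods.\<close>

lemma interval_local_to_global:
  fixes R :: "real \<Rightarrow> real \<Rightarrow> bool"
  assumes trans: "\<And>a b c. R a b \<Longrightarrow> R b c \<Longrightarrow> R a c" and refl: "\<And>a. R a a"
    and local: "\<And>s. s \<in> {t1..t2} \<Longrightarrow> \<exists>d>0. \<forall>a\<in>ball s d \<inter> {t1..t2}. \<forall>b\<in>ball s d \<inter> {t1..t2}.
                   a \<le> b \<longrightarrow> R a b"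
    and "t1 \<le> t2"
  shows "R t1 t2"
proof -
  obtain d where d: "\<And>s. s \<in> {t1..t2} \<Longrightarrow> d s > 0 \<and> (\<forall>a\<in>ball s (d s) \<inter> {t1..t2}.
                 \<forall>b\<in>ball s (d s) \<inter> {t1..t2}. a \<le> b \<longrightarrow> R a b)"
    using local by metis
  obtain \<delta> where "0 < \<delta>" and lebesgue: "\<And>T. T \<subseteq> {t1..t2} \<Longrightarrow> diameter T < \<delta> \<Longrightarrow>
      \<exists>B \<in> (\<lambda>s. ball s (d s)) ` {t1..t2}. T \<subseteq> B"
  proof (rule Lebesgue_number_lemma[of "{t1..t2}" "(\<lambda>s. ball s (d s)) ` {t1..t2}"])
    show "{t1..t2} \<subseteq> \<Union> ((\<lambda>s. ball s (d s)) ` {t1..t2})"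
      using d by force
  qed (use \<open>t1 \<le> t2\<close> in auto)
  have step: "R a b" if ab: "t1 \<le> a" "a \<le> b" "b \<le> t2" "b - a < \<delta>" for a b
  proof -
    have "diameter {a, b} \<le> b - a"
      by (rule diameter_le) (use ab in auto)
    then obtain s where "s \<in> {t1..t2}" "{a, b} \<subseteq> ball s (d s)"
      using lebesgue[of "{a, b}"] ab by fastforce
    then show ?thesis using d ab by auto
  qed
  define h where "h = \<delta> / 2"
  have "h > 0" using \<open>0 < \<delta>\<close> by (simp add: h_def)
  have chain: "R t1 (min t2 (t1 + real n * h))" for n
  proof (induction n)
    case 0
    then show ?case using refl \<open>t1 \<le> t2\<close> by (simp add: min_def)
  next
    case (Suc n)
    have "R (min t2 (t1 + real n * h)) (min t2 (t1 + real (Suc n) * h))"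
      by (rule step) (use \<open>h > 0\<close> \<open>t1 \<le> t2\<close> h_def \<open>0 < \<delta>\<close> in \<open>auto simp: min_def algebra_simps\<close>)
    then show ?case using Suc trans by blast
  qed
  obtain n where "(t2 - t1) / h < real n"
    using reals_Archimedean2 by blast
  then have "min t2 (t1 + real n * h) = t2"
    using \<open>h > 0\<close> by (simp add: field_simps)
  then show ?thesis using chain[of n] by simp
qed

lemma locally_causally_closedE:
  assumes "locally_causally_closed le"
  obtains \<epsilon> where "\<epsilon> > 0"
    "\<And>p q p0 q0. p \<longlonglongrightarrow> p0 \<Longrightarrow> q \<longlonglongrightarrow> q0 \<Longrightarrow> p0 \<in> ball x \<epsilon> \<Longrightarrow> q0 \<in> ball x \<epsilon> \<Longrightarrow>
        eventually (\<lambda>k. le (p k) (q k)) sequentially \<Longrightarrow> le p0 q0"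
proof -
  obtain U where "x \<in> interior U" and closed: "\<And>p q p0 q0. (\<forall>n. p n \<in> U \<and> q n \<in> U \<and> le (p n) (q n)) \<and>
      p \<longlonglongrightarrow> p0 \<and> p0 \<in> closure U \<and> q \<longlonglongrightarrow> q0 \<and> q0 \<in> closure U \<Longrightarrow> le p0 q0"
    using assms unfolding locally_causally_closed_def by blast
  then obtain \<epsilon> where "\<epsilon> > 0" and "ball x \<epsilon> \<subseteq> interior U"
    using open_interior open_contains_ball by blast
  then have ball: "ball x \<epsilon> \<subseteq> U"
    using interior_subset by blast
  have limit: "le p0 q0" if p: "p \<longlonglongrightarrow> p0" and q: "q \<longlonglongrightarrow> q0" and "p0 \<in> ball x \<epsilon>" "q0 \<in> ball x \<epsilon>"
    and "eventually (\<lambda>k. le (p k) (q k)) sequentially" for p q p0 q0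
  proof -
    have "eventually (\<lambda>k. p k \<in> ball x \<epsilon> \<and> q k \<in> ball x \<epsilon> \<and> le (p k) (q k)) sequentially"
      using topological_tendstoD[OF p open_ball] topological_tendstoD[OF q open_ball] that
      by (intro eventually_conj) auto
    then obtain N where N: "\<And>k. k \<ge> N \<Longrightarrow> p k \<in> U \<and> q k \<in> U \<and> le (p k) (q k)"
      using ball unfolding eventually_sequentially by blast
    show ?thesis
    proof (rule closed[of "\<lambda>k. p (k + N)" "\<lambda>k. q (k + N)"], intro conjI)
      show "\<forall>k. p (k + N) \<in> U \<and> q (k + N) \<in> U \<and> le (p (k + N)) (q (k + N))"
        using N by simp
      show "(\<lambda>k. p (k + N)) \<longlonglongrightarrow> p0" "(\<lambda>k. q (k + N)) \<longlonglongrightarrow> q0"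
        using LIMSEQ_ignore_initial_segment p q by blast+
      show "p0 \<in> closure U" "q0 \<in> closure U"
        using that ball closure_subset by blast+
    qed
  qed
  show ?thesis
    using \<open>\<epsilon> > 0\<close> limit by (rule that)
qed

lemma limit_curve_causal:
  fixes \<sigma> :: "nat \<Rightarrow> real \<Rightarrow> 'a::metric_space" and g :: "real \<Rightarrow> 'a"
  assumes lcc: "locally_causally_closed le" and "reflp le" "transp le"
    and "is_interval I" and cont: "continuous_on I g"
    and lim: "\<And>t. t \<in> I \<Longrightarrow> (\<lambda>k. \<sigma> k t) \<longlonglongrightarrow> g t"
    and causal: "\<And>s t. s \<in> I \<Longrightarrow> t \<in> I \<Longrightarrow> s < t \<Longrightarrow> eventually (\<lambda>k. le (\<sigma> k s) (\<sigma> k t)) sequentially"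
    and "a \<in> I" "b \<in> I" "a \<le> b"
  shows "le (g a) (g b)"
proof (rule interval_local_to_global[where R = "\<lambda>a b. le (g a) (g b)"])
  show "le (g t) (g v)" if "le (g t) (g u)" "le (g u) (g v)" for t u v
    using \<open>transp le\<close> that by (rule transpD)
  show "le (g t) (g t)" for t
    using \<open>reflp le\<close> by (rule reflpD)
  show "a \<le> b" by fact
  have ab: "{a..b} \<subseteq> I"
    using \<open>is_interval I\<close> \<open>a \<in> I\<close> \<open>b \<in> I\<close> unfolding is_interval_1 by (meson atLeastAtMost_iff subsetI)
  fix s assume "s \<in> {a..b}"
  obtain \<epsilon> where "\<epsilon> > 0" and closed: "\<And>p q p0 q0. p \<longlonglongrightarrow> p0 \<Longrightarrow> q \<longlonglongrightarrow> q0 \<Longrightarrow>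
      p0 \<in> ball (g s) \<epsilon> \<Longrightarrow> q0 \<in> ball (g s) \<epsilon> \<Longrightarrow> eventually (\<lambda>k. le (p k) (q k)) sequentially \<Longrightarrow> le p0 q0"
    using locally_causally_closedE[OF lcc, of "g s"] by blast
  obtain d where "d > 0" and d: "\<And>t. t \<in> I \<Longrightarrow> dist t s < d \<Longrightarrow> dist (g t) (g s) < \<epsilon>"
    using cont \<open>s \<in> {a..b}\<close> ab \<open>\<epsilon> > 0\<close> unfolding continuous_on_iff by (meson subsetD)
  have "le (g t) (g u)" if t: "t \<in> ball s d \<inter> {a..b}" and u: "u \<in> ball s d \<inter> {a..b}" and "t \<le> u"
    for t u
  proof (cases "t = u")
    case True
    then show ?thesis using \<open>reflp le\<close> by (simp add: reflpD)
  next
    case False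
    have "t \<in> I" "u \<in> I" using t u ab by auto
    moreover have "g t \<in> ball (g s) \<epsilon>" "g u \<in> ball (g s) \<epsilon>"
      using d[of t] d[of u] t u \<open>t \<in> I\<close> \<open>u \<in> I\<close> by (auto simp: dist_commute)
    moreover have "t < u" using False \<open>t \<le> u\<close> by simp
    ultimately show ?thesis
      using closed[OF lim lim] causal by blast
  qed
  then show "\<exists>d>0. \<forall>t\<in>ball s d \<inter> {a..b}. \<forall>u\<in>ball s d \<inter> {a..b}. t \<le> u \<longrightarrow> le (g t) (g u)"
    using \<open>d > 0\<close> by blast
qed

lemma arclength_limit_curve_inextendible:
  fixes \<sigma> :: "nat \<Rightarrow> real \<Rightarrow> 'a::metric_space" and l :: "nat \<Rightarrow> real" and g :: "real \<Rightarrow> 'a"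
  assumes comp: "d_compatible le"
    and curves: "\<And>k. future_causal_curve le (\<sigma> k) {0..l k}"
    and arclength: "\<And>k s t. 0 \<le> s \<Longrightarrow> s \<le> t \<Longrightarrow> t \<le> l k \<Longrightarrow> curve_length (\<sigma> k) {s..t} = ereal (t - s)"
    and conv: "\<And>T e. e > 0 \<Longrightarrow> \<exists>N. \<forall>k\<ge>N. T \<le> l k \<and> (\<forall>t\<in>{0..T}. dist (\<sigma> k t) (g t) < e)"
  shows "\<not> (g \<longlongrightarrow> y) at_top"
proof
  assume lim: "(g \<longlongrightarrow> y) at_top"
  obtain U C where "y \<in> interior U" "C > 0"
    and bound: "\<And>c I. causal_curve le c I \<and> c ` I \<subseteq> U \<Longrightarrow> curve_length c I \<le> ereal C"
    using comp unfolding d_compatible_def by blast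
  then obtain \<rho> where "\<rho> > 0" and "ball y \<rho> \<subseteq> interior U"
    using open_interior open_contains_ball by blast
  then have ball: "ball y \<rho> \<subseteq> U"
    using interior_subset by blast
  have "\<forall>\<^sub>F t in at_top. dist (g t) y < \<rho>/2"
    by (rule tendstoD[OF lim]) (use \<open>\<rho> > 0\<close> in simp)
  then obtain T0 where "T0 \<ge> 0" and T0: "\<And>t. t \<ge> T0 \<Longrightarrow> dist (g t) y < \<rho>/2"
    unfolding eventually_at_top_linorder by (metis max.cobounded2 max.boundedE)
  define T1 where "T1 = T0 + 2 * C"
  obtain k where "T1 \<le> l k" and close: "\<forall>t\<in>{0..T1}. dist (\<sigma> k t) (g t) < \<rho>/2"
    using conv[where T = T1 and e = "\<rho>/2"] \<open>\<rho> > 0\<close> by fastforce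
  have len: "curve_length (\<sigma> k) {T0..T1} = ereal (2 * C)"
    using arclength[of T0 T1 k] \<open>T0 \<ge> 0\<close> \<open>T1 \<le> l k\<close> \<open>C > 0\<close> by (simp add: T1_def)
  have "\<sigma> k ` {T0..T1} \<subseteq> U"
  proof (rule image_subsetI)
    fix t assume t: "t \<in> {T0..T1}"
    then have "dist (\<sigma> k t) (g t) < \<rho>/2" "dist (g t) y < \<rho>/2"
      using close T0 \<open>T0 \<ge> 0\<close> by auto
    then have "dist (\<sigma> k t) y < \<rho>"
      using dist_triangle[of "\<sigma> k t" y "g t"] by linarith
    then show "\<sigma> k t \<in> U"
      using ball by (auto simp: dist_commute)
  qed
  moreover have "future_causal_curve le (\<sigma> k) {T0..T1}"
  proof (rule future_causal_curve_subinterval[OF curves is_interval_cc])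
    show "{T0..T1} \<subseteq> {0..l k}"
      using \<open>T0 \<ge> 0\<close> \<open>T1 \<le> l k\<close> by auto
    show "\<exists>s\<in>{T0..T1}. \<exists>t\<in>{T0..T1}. \<sigma> k s \<noteq> \<sigma> k t"
      using len \<open>C > 0\<close> by (intro curve_length_pos_imp_nonconstant) simp
  qed
  ultimately have "curve_length (\<sigma> k) {T0..T1} \<le> ereal C"
    using bound unfolding causal_curve_def by blast
  with len \<open>C > 0\<close> show False by simp
qed

lemma not_tendsto_imp_nonconstant:
  fixes g :: "real \<Rightarrow> 'a::topological_space"
  assumes "\<not> (g \<longlongrightarrow> g a) at_top"
  shows "\<exists>s\<in>{a..}. \<exists>t\<in>{a..}. g s \<noteq> g t"
proof (rule ccontr)
  assume const: "\<not> (\<exists>s\<in>{a..}. \<exists>t\<in>{a..}. g s \<noteq> g t)"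
  have "\<forall>\<^sub>F t in at_top. g t = g a"
    using eventually_ge_at_top[of a] by (rule eventually_mono) (meson const atLeast_iff order_refl)
  then have "(g \<longlongrightarrow> g a) at_top"
    by (rule tendsto_eventually)
  with assms show False
    by contradiction
qed

lemma limit_of_future_causal_curves_causal:
  fixes \<sigma> :: "nat \<Rightarrow> real \<Rightarrow> 'a::metric_space" and l :: "nat \<Rightarrow> real" and g :: "real \<Rightarrow> 'a"
  assumes "locally_causally_closed le" "reflp le" "transp le"
    and curves: "\<And>k. future_causal_curve le (\<sigma> k) {0..l k}"
    and conv: "\<And>T e. e > 0 \<Longrightarrow> \<exists>N. \<forall>k\<ge>N. T \<le> l k \<and> (\<forall>t\<in>{0..T}. dist (\<sigma> k t) (g t) < e)"
    and "continuous_on {0..} g" "0 \<le> a" "a \<le> b"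
  shows "le (g a) (g b)"
proof (rule limit_curve_causal[where I = "{0..}" and \<sigma> = \<sigma>])
  show "(\<lambda>k. \<sigma> k t) \<longlonglongrightarrow> g t" if "t \<in> {0..}" for t
  proof (rule tendstoI)
    fix e :: real assume "e > 0"
    then obtain N where N: "\<forall>k\<ge>N. t \<le> l k \<and> (\<forall>s\<in>{0..t}. dist (\<sigma> k s) (g s) < e)"
      using conv by blast
    have "t \<in> {0..t}"
      using that by simp
    then have "dist (\<sigma> k t) (g t) < e" if "k \<ge> N" for k
      using N that by blast
    then show "\<forall>\<^sub>F k in sequentially. dist (\<sigma> k t) (g t) < e"
      unfolding eventually_sequentially by blast
  qed
  show "\<forall>\<^sub>F k in sequentially. le (\<sigma> k s) (\<sigma> k t)" if "s \<in> {0..}" "t \<in> {0..}" "s < t" for s t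
  proof -
    obtain N where "\<forall>k\<ge>N. t \<le> l k"
      using conv[where T = t and e = 1] by auto
    then have "le (\<sigma> k s) (\<sigma> k t)" if "k \<ge> N" for k
      using curves[of k] \<open>s \<in> {0..}\<close> \<open>s < t\<close> that unfolding future_causal_curve_def by auto
    then show ?thesis
      unfolding eventually_sequentially by blast
  qed
qed (use assms in auto)

lemma lipschitz_on_clamp_extension:
  fixes c :: "real \<Rightarrow> 'a::metric_space"
  assumes "1-lipschitz_on {a..b} c" "a \<le> b"
  shows "1-lipschitz_on UNIV (\<lambda>t. c (max a (min t b)))"
proof -
  have clamp: "1-lipschitz_on UNIV (\<lambda>t::real. max a (min t b))"
    by (rule lipschitz_onI) (auto simp: dist_real_def max_def min_def)
  have "(\<lambda>t. max a (min t b)) ` UNIV \<subseteq> {a..b}"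
    using \<open>a \<le> b\<close> by auto
  then have "(1 * 1)-lipschitz_on UNIV (c \<circ> (\<lambda>t. max a (min t b)))"
    by (intro lipschitz_on_compose[OF clamp] lipschitz_on_subset[OF assms(1)])
  then show ?thesis
    by (simp add: o_def)
qed

lemma lipschitz_curves_pointwise_compact:
  fixes c :: "nat \<Rightarrow> real \<Rightarrow> 'a::metric_space"
  assumes lip: "\<And>n. 1-lipschitz_on UNIV (c n)"
    and "(\<exists>K. compact K \<and> (\<forall>n t. c n t \<in> K)) \<or> (proper_metric TYPE('a) \<and> (\<exists>x. (\<lambda>n. c n 0) \<longlonglongrightarrow> x))"
  obtains C where "\<And>t. compact (C t)" "\<And>n t. c n t \<in> C t"
  using assms(2)
proof
  assume "\<exists>K. compact K \<and> (\<forall>n t. c n t \<in> K)"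
  then obtain K where "compact K" "\<And>n t. c n t \<in> K"
    by blast
  then show thesis
    by (rule that)
next
  assume "proper_metric TYPE('a) \<and> (\<exists>x. (\<lambda>n. c n 0) \<longlonglongrightarrow> x)"
  then obtain x where proper: "proper_metric TYPE('a)" and lim: "(\<lambda>n. c n 0) \<longlonglongrightarrow> x"
    by blast
  have "bounded (range (\<lambda>n. c n 0))"
    using lim by (rule convergent_imp_bounded)
  then obtain B where B: "\<And>n. dist x (c n 0) \<le> B"
    unfolding bounded_any_center[of _ x] by auto
  show thesis
  proof (rule that[of "\<lambda>t. cball x (B + \<bar>t\<bar>)"])
    show "compact (cball x (B + \<bar>t\<bar>))" for t
      using proper unfolding proper_metric_def by simp
    show "c n t \<in> cball x (B + \<bar>t\<bar>)" for n t
      using B[of n] lipschitz_onD[OF lip[of n], of 0 t] dist_triangle[of x "c n t" "c n 0"]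
      by (simp add: dist_real_def)
  qed
qed

lemma arclength_curves_convergent_subseq:
  fixes \<gamma> :: "nat \<Rightarrow> real \<Rightarrow> 'a::metric_space" and L :: "nat \<Rightarrow> real"
  assumes lip: "\<And>n. 1-lipschitz_on {0..L n} (\<gamma> n)" and "\<And>n. 0 \<le> L n"
    and Lto: "filterlim L at_top sequentially"
    and bnd: "(\<exists>K. compact K \<and> (\<forall>n. \<gamma> n ` {0..L n} \<subseteq> K)) \<or>
              (proper_metric TYPE('a) \<and> (\<exists>x. (\<lambda>n. \<gamma> n 0) \<longlonglongrightarrow> x))"
  obtains r :: "nat \<Rightarrow> nat" and g where "strict_mono r" "1-lipschitz_on UNIV g"
    "\<And>T e. e > 0 \<Longrightarrow> \<exists>N. \<forall>k\<ge>N. T \<le> L (r k) \<and> (\<forall>t\<in>{0..T}. dist (\<gamma> (r k) t) (g t) < e)"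
proof -
  define c where "c n t = \<gamma> n (max 0 (min t (L n)))" for n t
  have agree: "c n t = \<gamma> n t" if "t \<in> {0..L n}" for n t
    using that by (simp add: c_def)
  have c_lip: "1-lipschitz_on UNIV (c n)" for n
    unfolding c_def by (rule lipschitz_on_clamp_extension[OF lip \<open>0 \<le> L n\<close>])
  have c_bnd: "(\<exists>K. compact K \<and> (\<forall>n t. c n t \<in> K)) \<or> (proper_metric TYPE('a) \<and> (\<exists>x. (\<lambda>n. c n 0) \<longlonglongrightarrow> x))"
    using bnd
  proof (elim disjE)
    assume "\<exists>K. compact K \<and> (\<forall>n. \<gamma> n ` {0..L n} \<subseteq> K)"
    then obtain K where "compact K" "\<And>n. \<gamma> n ` {0..L n} \<subseteq> K"
      by blast
    moreover have "max 0 (min t (L n)) \<in> {0..L n}" for n t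
      using \<open>0 \<le> L n\<close> by simp
    ultimately have "compact K \<and> (\<forall>n t. c n t \<in> K)"
      unfolding c_def by blast
    then show ?thesis by blast
  next
    assume "proper_metric TYPE('a) \<and> (\<exists>x. (\<lambda>n. \<gamma> n 0) \<longlonglongrightarrow> x)"
    moreover have "c n 0 = \<gamma> n 0" for n
      using agree \<open>0 \<le> L n\<close> by simp
    ultimately show ?thesis by simp
  qed
  obtain C where C: "\<And>t. compact (C t)" "\<And>n t. c n t \<in> C t"
    using lipschitz_curves_pointwise_compact[where c = c, OF c_lip c_bnd] by blast
  obtain r g where r: "strict_mono r" and g: "1-lipschitz_on UNIV g"
    and unif: "\<And>S. compact S \<Longrightarrow> uniform_limit S (\<lambda>k. c (r k)) g sequentially"
    using lipschitz_Arzela_Ascoli[where C = C and c = c, OF C c_lip] by blast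
  have "filterlim (\<lambda>k. L (r k)) at_top sequentially"
    using filterlim_compose[OF Lto filterlim_subseq[OF r]] by (simp add: o_def)
  then have long: "\<forall>\<^sub>F k in sequentially. T \<le> L (r k)" for T
    by (simp add: filterlim_at_top)
  have conv: "\<exists>N. \<forall>k\<ge>N. T \<le> L (r k) \<and> (\<forall>t\<in>{0..T}. dist (\<gamma> (r k) t) (g t) < e)"
    if "e > 0" for T e
  proof -
    have "\<forall>\<^sub>F k in sequentially. T \<le> L (r k) \<and> (\<forall>t\<in>{0..T}. dist (c (r k) t) (g t) < e)"
      using long uniform_limitD[OF unif[OF compact_Icc] \<open>e > 0\<close>] by (rule eventually_conj)
    then obtain N where N: "\<And>k. k \<ge> N \<Longrightarrow> T \<le> L (r k) \<and> (\<forall>t\<in>{0..T}. dist (c (r k) t) (g t) < e)"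
      unfolding eventually_sequentially by blast
    have "dist (\<gamma> (r k) t) (g t) < e" if "k \<ge> N" "t \<in> {0..T}" for k t
    proof -
      have "T \<le> L (r k)" "dist (c (r k) t) (g t) < e"
        using N[OF that(1)] that(2) by auto
      moreover have "t \<in> {0..L (r k)}"
        using that(2) \<open>T \<le> L (r k)\<close> by simp
      ultimately show ?thesis
        using agree by simp
    qed
    then show ?thesis
      using N by blast
  qed
  show ?thesis
    using that r g conv by blast
qed

theorem theorem3p14:
  fixes ll le :: "'a::metric_space \<Rightarrow> 'a \<Rightarrow> bool"
    and tau :: "'a \<Rightarrow> 'a \<Rightarrow> ennreal"
    and \<gamma> :: "nat \<Rightarrow> real \<Rightarrow> 'a"
    and L :: "nat \<Rightarrow> real"
  assumes lpls: "lorentzian_pre_length_space ll le tau"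
    and lcc: "locally_causally_closed le"
    and comp: "d_compatible le"
    and curves: "\<And>n. future_causal_curve le (\<gamma> n) {0..L n}"
    and arclength: "\<And>n s t. 0 \<le> s \<Longrightarrow> s \<le> t \<Longrightarrow> t \<le> L n \<Longrightarrow>
                       curve_length (\<gamma> n) {s..t} = ereal (t - s)"
    and Lto: "filterlim L at_top sequentially"
    and bnd: "(\<exists>K. compact K \<and> (\<forall>n. \<gamma> n ` {0..L n} \<subseteq> K)) \<or>
              (proper_metric TYPE('a) \<and> (\<exists>x. (\<lambda>n. \<gamma> n 0) \<longlonglongrightarrow> x))"
  shows "\<exists>(r::nat \<Rightarrow> nat) g. strict_mono r \<and> future_causal_curve le g {0..} \<and>
           (\<forall>T>0. \<forall>e>0. \<exists>N. \<forall>k\<ge>N. T \<le> L (r k) \<and>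
                 (\<forall>t\<in>{0..T}. dist (\<gamma> (r k) t) (g t) < e)) \<and>
           \<not> (\<exists>y. (g \<longlongrightarrow> y) at_top)"
proof -
  have "reflp le" "transp le"
    using lpls unfolding lorentzian_pre_length_space_def causal_space_def by auto
  have L_nonneg: "0 \<le> L n" for n
    using curves[of n] unfolding future_causal_curve_def by auto
  have lip: "1-lipschitz_on {0..L n} (\<gamma> n)" for n
    by (intro arclength_imp_lipschitz_on arclength)
  obtain r :: "nat \<Rightarrow> nat" and g where r: "strict_mono r" and g: "1-lipschitz_on UNIV g"
    and conv: "\<And>T e. e > 0 \<Longrightarrow> \<exists>N. \<forall>k\<ge>N. T \<le> L (r k) \<and> (\<forall>t\<in>{0..T}. dist (\<gamma> (r k) t) (g t) < e)"
    by (rule arclength_curves_convergent_subseq[where \<gamma> = \<gamma> and L = L, OF lip L_nonneg Lto bnd]) (rule that)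
  have inextendible: "\<not> (g \<longlongrightarrow> y) at_top" for y
    using comp curves arclength conv by (rule arclength_limit_curve_inextendible)
  have "continuous_on {0..} g"
    using lipschitz_on_continuous_on[OF g] by (rule continuous_on_subset) simp
  then have "le (g s) (g t)" if "0 \<le> s" "s \<le> t" for s t
    using limit_of_future_causal_curves_causal[where \<sigma> = "\<lambda>k. \<gamma> (r k)" and l = "\<lambda>k. L (r k)",
        OF lcc \<open>reflp le\<close> \<open>transp le\<close> curves conv] that by blast
  moreover have "\<exists>s\<in>{0..}. \<exists>t\<in>{0..}. g s \<noteq> g t"
    using inextendible by (rule not_tendsto_imp_nonconstant)
  moreover have "locally_lipschitz_on {0..} g"
    using lipschitz_on_subset[OF g subset_UNIV] by (rule lipschitz_on_imp_locally_lipschitz_on)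
  ultimately have "future_causal_curve le g {0..}"
    unfolding future_causal_curve_def using is_interval_ci by auto
  then show ?thesis
    using r conv inextendible by blast
qed

end
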